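(* Let $\mathcal C=\{c_1,\ldots,c_m\}$ and let $n\ge 6(m-2)$. Suppose the manipulator has no information, i.e. the information set is $E=\mathcal F_n$, the set of all $n$-profiles of linear orders on $\mathcal C$. Then every positional scoring rule (with ties broken in the order $c_1\succ\cdots\succ c_m$) is immune to dominating manipulation: for every linear order $V_M$ on $\mathcal C$, no linear order $U$ on $\mathcal C$ dominates $V_M$.
   Context: A positional scoring rule is given by a scoring vector $(s(1),\ldots,s(m))$ of integers with $s(1)\ge s(2)\ge\cdots\ge s(m)$; each vote gives $s(i)$ points to the alternative in its $i$-th position, and the alternative with the highest total wins, ties broken in favor of smallest index. There are $n$ non-manipulators and one manipulator with true preferences $V_M$. Given an information set $E$ (set of $n$-profiles of the non-manipulators), a vote $U$ dominates a vote $V$ if for every $P\in E$, $r(P\cup\{U\})$ is ranked weakly above $r(P\cup\{V\})$ in $V_M$, and for some $P'\in E$ strictly above. Immunity means that for every $V_M$ no vote dominates $V_M$. *)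

theory Defs
  imports Main
begin

text \<open>Alternatives c_1,...,c_m are encoded as the naturals 0,...,m-1 (c_(i+1) is i).
  A linear order on the alternatives is a list enumerating them, best first.\<close>

definition linord :: "nat \<Rightarrow> nat list \<Rightarrow> bool" where
  "linord m V \<longleftrightarrow> distinct V \<and> set V = {..<m}"

text \<open>0-based position of x in the list (length of list if absent).\<close>
fun pos :: "nat list \<Rightarrow> nat \<Rightarrow> nat" where
  "pos [] x = 0"
| "pos (y # ys) x = (if y = x then 0 else Suc (pos ys x))"

definition scoring_vector :: "nat \<Rightarrow> (nat \<Rightarrow> int) \<Rightarrow> bool" where
  "scoring_vector m s \<longleftrightarrow> (\<forall>i j. 1 \<le> i \<longrightarrow> i \<le> j \<longrightarrow> j \<le> m \<longrightarrow> s j \<le> s i)"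

definition points :: "(nat \<Rightarrow> int) \<Rightarrow> nat list \<Rightarrow> nat \<Rightarrow> int" where
  "points s V a = s (pos V a + 1)"

definition total_score :: "(nat \<Rightarrow> int) \<Rightarrow> nat list list \<Rightarrow> nat \<Rightarrow> int" where
  "total_score s P a = (\<Sum>V\<leftarrow>P. points s V a)"

definition winner :: "nat \<Rightarrow> (nat \<Rightarrow> int) \<Rightarrow> nat list list \<Rightarrow> nat" where
  "winner m s P = (LEAST a. a < m \<and> (\<forall>b<m. total_score s P b \<le> total_score s P a))"

text \<open>The set F_n of all n-profiles (of the non-manipulators).\<close>
definition profiles :: "nat \<Rightarrow> nat \<Rightarrow> nat list list set" where
  "profiles m n = {P. length P = n \<and> (\<forall>V\<in>set P. linord m V)}"

definition weakly_above :: "nat list \<Rightarrow> nat \<Rightarrow> nat \<Rightarrow> bool" where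
  "weakly_above VM x y \<longleftrightarrow> pos VM x \<le> pos VM y"

definition strictly_above :: "nat list \<Rightarrow> nat \<Rightarrow> nat \<Rightarrow> bool" where
  "strictly_above VM x y \<longleftrightarrow> pos VM x < pos VM y"

definition dominates :: "nat \<Rightarrow> (nat \<Rightarrow> int) \<Rightarrow> nat list list set \<Rightarrow> nat list \<Rightarrow> nat list \<Rightarrow> nat list \<Rightarrow> bool" where
  "dominates m s E VM U V \<longleftrightarrow>
     (\<forall>P\<in>E. weakly_above VM (winner m s (U # P)) (winner m s (V # P))) \<and>
     (\<exists>P\<in>E. strictly_above VM (winner m s (U # P)) (winner m s (V # P)))"

end

theory Submission
  imports Defs "HOL-Combinatorics.Transposition"
begin

(*
  If U dominates V_M, the two votes must give some candidate different points; as both hand out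
  the same total, some b gains strictly from U, and b is not V_M's favourite a. It then suffices to
  find one profile in which the manipulator's vote decides: V_M makes a win and U makes b win.

  Such a profile consists of at most two separating votes, relabellings of V_M or U by a
  transposition or a 3-cycle, which fix the contest between a and b, and N pairs of votes
  a b R_t and b a R_t with R_t running through the rotations of the remaining candidates. The pairs
  give a and b equal scores, and since N >= 2(m - 2) every other candidate is ranked last in at
  least two of them, leaving it s 1 + s 2 - 2 s m behind twice; this absorbs everything the
  separating votes and the manipulator can do for it. The bound n >= 6(m - 2) makes room for them.
*)

lemma pos_less_length: "x \<in> set V \<Longrightarrow> pos V x < length V"
  by (induction V) auto

lemma pos_nth: "distinct V \<Longrightarrow> i < length V \<Longrightarrow> pos V (V ! i) = i"
proof (induction V arbitrary: i)
  case (Cons y ys)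
  then show ?case by (cases i) auto
qed simp

lemma nth_pos: "x \<in> set V \<Longrightarrow> V ! pos V x = x"
  by (induction V) auto

lemma pos_map_inj: "inj f \<Longrightarrow> pos (map f V) (f x) = pos V x"
  by (induction V) (auto simp: inj_eq)

lemma pos_hd_filter_le: "c \<in> set V \<Longrightarrow> Q c \<Longrightarrow> pos V (hd (filter Q V)) \<le> pos V c"
  by (induction V) auto

lemma hd_filter_mem: "c \<in> set V \<Longrightarrow> Q c \<Longrightarrow> hd (filter Q V) \<in> set V \<and> Q (hd (filter Q V))"
  by (induction V) auto

lemma linord_mem_iff: "linord m V \<Longrightarrow> x \<in> set V \<longleftrightarrow> x < m"
  unfolding linord_def by auto

lemma linord_length: "linord m V \<Longrightarrow> length V = m"
  unfolding linord_def by (metis card_lessThan distinct_card)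

lemma linord_pos_less: "linord m V \<Longrightarrow> x < m \<Longrightarrow> pos V x < m"
  using pos_less_length linord_length linord_mem_iff by metis

lemma linord_map:
  assumes "linord m V" "inj f" "\<forall>x<m. f x < m"
  shows "linord m (map f V)"
proof -
  have "f ` {..<m} = {..<m}"
    by (rule endo_inj_surj) (use assms in \<open>auto intro: inj_on_subset\<close>)
  then show ?thesis
    using assms unfolding linord_def by (auto simp: distinct_map intro: inj_on_subset)
qed

lemma linord_map_transpose:
  "linord m V \<Longrightarrow> a < m \<Longrightarrow> b < m \<Longrightarrow> linord m (map (transpose a b) V)"
  by (rule linord_map) (auto simp: inj_transpose transpose_def)

lemma linord_hd:
  assumes "linord m V" "0 < m"
  shows "hd V < m" "pos V (hd V) = 0"
proof -
  obtain y ys where V: "V = y # ys"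
    using linord_length[OF assms(1)] assms(2) by (cases V) auto
  show "hd V < m" using linord_mem_iff[OF assms(1), of y] by (simp add: V)
  show "pos V (hd V) = 0" by (simp add: V)
qed

lemma scoring_vector_mono:
  "scoring_vector m s \<Longrightarrow> 1 \<le> i \<Longrightarrow> i \<le> j \<Longrightarrow> j \<le> m \<Longrightarrow> s j \<le> s i"
  unfolding scoring_vector_def by blast

lemma points_ge_last:
  assumes "scoring_vector m s" "linord m V" "x < m"
  shows "s m \<le> points s V x"
  using linord_pos_less[OF assms(2,3)] scoring_vector_mono[OF assms(1), of "pos V x + 1" m]
  by (simp add: points_def)

lemma points_le_first:
  assumes "scoring_vector m s" "linord m V" "x < m"
  shows "points s V x \<le> s 1"
  using linord_pos_less[OF assms(2,3)] scoring_vector_mono[OF assms(1), of 1 "pos V x + 1"]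
  by (simp add: points_def)

lemma points_antimono:
  assumes "scoring_vector m s" "linord m V" "y < m" "pos V x \<le> pos V y"
  shows "points s V y \<le> points s V x"
  using linord_pos_less[OF assms(2,3)] assms(4)
    scoring_vector_mono[OF assms(1), of "pos V x + 1" "pos V y + 1"]
  by (simp add: points_def)

lemma points_spread:
  "scoring_vector m s \<Longrightarrow> linord m V \<Longrightarrow> x < m \<Longrightarrow> y < m \<Longrightarrow> s m - s 1 \<le> points s V x - points s V y"
  using points_ge_last points_le_first by fastforce

lemma points_map_transpose [simp]:
  "points s (map (transpose a b) V) x = points s V (transpose a b x)"
  using pos_map_inj[OF inj_transpose, of a b V "transpose a b x"] by (simp add: points_def)

lemma total_score_Cons [simp]: "total_score s (V # P) x = points s V x + total_score s P x"
  by (simp add: total_score_def)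

lemma total_score_append [simp]: "total_score s (P @ Q) x = total_score s P x + total_score s Q x"
  by (simp add: total_score_def)

lemma total_score_Nil [simp]: "total_score s [] x = 0"
  by (simp add: total_score_def)

lemma sum_points_linord:
  assumes "linord m V"
  shows "(\<Sum>c<m. points s V c) = (\<Sum>i<m. s (i + 1))"
proof -
  have d: "distinct V" and l: "length V = m" and st: "set V = {..<m}"
    using assms linord_length unfolding linord_def by auto
  have inj: "inj_on ((!) V) {..<m}"
    using inj_on_nth[OF d] l by simp
  have "(\<Sum>i<m. s (i + 1)) = (\<Sum>i<m. points s V (V ! i))"
    using pos_nth[OF d] l by (auto simp: points_def intro!: sum.cong)
  also have "\<dots> = (\<Sum>c\<in>(!) V ` {..<m}. points s V c)"
    by (simp add: sum.reindex[OF inj])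
  also have "(!) V ` {..<m} = {..<m}"
    using st l by (auto simp: set_conv_nth)
  finally show ?thesis by simp
qed

lemma exists_points_gain:
  assumes "linord m U" "linord m V" "\<exists>c<m. points s U c \<noteq> points s V c"
  shows "\<exists>b<m. points s V b < points s U b"
proof (rule ccontr)
  assume "\<not> ?thesis"
  then have "\<forall>c\<in>{..<m}. points s U c \<le> points s V c" by auto
  moreover from assms(3) this have "\<exists>c\<in>{..<m}. points s U c < points s V c"
    by (auto simp: less_le)
  ultimately have "(\<Sum>c<m. points s U c) < (\<Sum>c<m. points s V c)"
    by (intro sum_strict_mono_ex1) auto
  then show False
    using sum_points_linord[OF assms(1)] sum_points_linord[OF assms(2)] by simp
qed

definition beats :: "(nat \<Rightarrow> int) \<Rightarrow> nat list list \<Rightarrow> nat \<Rightarrow> nat \<Rightarrow> bool" where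
  "beats s Q x y \<longleftrightarrow>
     total_score s Q y < total_score s Q x \<or> (total_score s Q y = total_score s Q x \<and> x < y)"

lemma winner_eqI:
  assumes "x < m" "\<forall>y<m. y \<noteq> x \<longrightarrow> beats s Q x y"
  shows "winner m s Q = x"
  unfolding winner_def
proof (rule Least_equality)
  show "x < m \<and> (\<forall>y<m. total_score s Q y \<le> total_score s Q x)"
    using assms unfolding beats_def by force
  fix z assume "z < m \<and> (\<forall>y<m. total_score s Q y \<le> total_score s Q z)"
  then show "x \<le> z"
    using assms unfolding beats_def by (metis leD nle_le order.strict_implies_order)
qed

lemma winner_Cons_cong:
  assumes "\<forall>x<m. points s U x = points s V x"
  shows "winner m s (U # P) = winner m s (V # P)"
  unfolding winner_def using assms by (intro arg_cong[where f = Least] ext) auto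

definition pair_block :: "nat \<Rightarrow> nat \<Rightarrow> nat list \<Rightarrow> nat \<Rightarrow> nat list list" where
  "pair_block a b R N = concat (map (\<lambda>t. [a # b # rotate t R, b # a # rotate t R]) [0..<N])"

lemma length_pair_block: "length (pair_block a b R N) = 2 * N"
  by (induction N) (simp_all add: pair_block_def)

lemma set_pair_block:
  "set (pair_block a b R N) = (\<Union>t<N. {a # b # rotate t R, b # a # rotate t R})"
  by (simp add: pair_block_def atLeast0LessThan)

lemma linord_pair_block:
  assumes "linord m (a # b # R)" "V \<in> set (pair_block a b R N)"
  shows "linord m V"
proof -
  have "linord m (a # b # rotate t R) \<and> linord m (b # a # rotate t R)" for t
    using assms(1) unfolding linord_def by (simp add: insert_commute)
  then show ?thesis using assms(2) unfolding set_pair_block by blast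
qed

lemma total_score_pair_block:
  "total_score s (pair_block a b R N) x =
     (\<Sum>t<N. points s (a # b # rotate t R) x + points s (b # a # rotate t R) x)"
  by (induction N) (simp_all add: pair_block_def)

lemma total_score_pair_block_top:
  assumes "a \<noteq> b"
  shows "total_score s (pair_block a b R N) a = int N * (s 1 + s 2)"
    and "total_score s (pair_block a b R N) b = int N * (s 1 + s 2)"
  using assms by (simp_all add: total_score_pair_block points_def numeral_2_eq_2 add.commute)

lemma exists_rotate_to_last:
  assumes "distinct R" "c \<in> set R"
  shows "\<exists>t<length R. pos (rotate t R) c = length R - 1"
proof -
  define k where "k = length R"
  define i where "i = pos R c"
  have "0 < k" "i < k" "R ! i = c"
    using assms pos_less_length[OF assms(2)] nth_pos[OF assms(2)] by (auto simp: k_def i_def)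
  define t where "t = Suc i mod k"
  have "(t + (k - 1)) mod k = (Suc i + (k - 1)) mod k"
    by (simp add: t_def mod_add_left_eq)
  also have "Suc i + (k - 1) = i + k" using \<open>0 < k\<close> by simp
  finally have "(t + (k - 1)) mod k = i" using \<open>i < k\<close> by simp
  then have "rotate t R ! (k - 1) = c"
    using \<open>0 < k\<close> \<open>R ! i = c\<close> by (simp add: nth_rotate k_def)
  then have "pos (rotate t R) c = k - 1"
    using pos_nth[of "rotate t R" "k - 1"] assms(1) \<open>0 < k\<close> by (simp add: k_def)
  moreover have "t < k" using \<open>0 < k\<close> by (simp add: t_def)
  ultimately show ?thesis by (auto simp: k_def)
qed

lemma total_score_pair_block_margin:
  assumes sv: "scoring_vector m s" and R: "distinct R" "length R + 2 = m" "2 * length R \<le> N"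
    and c: "c \<in> set R" "c \<noteq> a" "c \<noteq> b" and "a \<noteq> b"
  shows "total_score s (pair_block a b R N) c + 2 * (s 1 + s 2 - 2 * s m)
           \<le> total_score s (pair_block a b R N) a"
proof -
  define k where "k = length R"
  define gap where "gap t = s 1 + s 2 - 2 * s (pos (rotate t R) c + 3)" for t
  have gap_nonneg: "0 \<le> gap t" for t
  proof -
    have "pos (rotate t R) c + 3 \<le> m"
      using pos_less_length[of c "rotate t R"] c R by simp
    then show ?thesis
      using scoring_vector_mono[OF sv, of 2 "pos (rotate t R) c + 3"]
        scoring_vector_mono[OF sv, of 1 2] unfolding gap_def by simp
  qed
  \<comment> \<open>c is ranked last in the rotations t and t + k, which costs it s 1 + s 2 - 2 s m twice.\<close>
  obtain t where t: "t < k" "pos (rotate t R) c = k - 1"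
    using exists_rotate_to_last[OF R(1) c(1)] by (auto simp: k_def)
  have "k - 1 + 3 = m" using c(1) R(2) by (cases R) (auto simp: k_def)
  then have "gap t = s 1 + s 2 - 2 * s m" "gap (t + k) = s 1 + s 2 - 2 * s m"
    using t(2) rotate_conv_mod[of "t + k" R] rotate_conv_mod[of t R] by (simp_all add: gap_def k_def)
  moreover have "gap t + gap (t + k) \<le> (\<Sum>t<N. gap t)"
  proof -
    have "{t, t + k} \<subseteq> {..<N}" using t R(3) by (auto simp: k_def)
    moreover have "t \<noteq> t + k" using t by simp
    ultimately show ?thesis using sum_mono2[of "{..<N}" "{t, t + k}" gap] gap_nonneg by simp
  qed
  moreover have "total_score s (pair_block a b R N) c = (\<Sum>t<N. 2 * s (pos (rotate t R) c + 3))"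
    using c by (simp add: total_score_pair_block points_def numeral_3_eq_3)
  moreover have "(\<Sum>t<N. gap t) = int N * (s 1 + s 2) - (\<Sum>t<N. 2 * s (pos (rotate t R) c + 3))"
    by (simp add: gap_def sum_subtractf)
  ultimately show ?thesis
    using total_score_pair_block_top(1)[OF \<open>a \<noteq> b\<close>, where s = s and R = R and N = N]
    by (smt (verit))
qed

lemma winner_by_margin:
  assumes sv: "scoring_vector m s" and W: "linord m W" and xy: "x < m" "y < m" "x \<noteq> y"
    and beats: "beats s (W # D) x y" and top: "s m < points s W x"
    and D: "\<forall>c<m. c \<noteq> x \<longrightarrow> c \<noteq> y \<longrightarrow> s m - s 1 \<le> total_score s D x - total_score s D c"
    and B_tie: "total_score s B x = total_score s B y"
    and B_margin: "\<forall>c<m. c \<noteq> x \<longrightarrow> c \<noteq> y \<longrightarrow>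
                     total_score s B c + 2 * (s 1 + s 2 - 2 * s m) \<le> total_score s B x"
  shows "winner m s (W # D @ B) = x"
proof (rule winner_eqI[OF xy(1)], intro allI impI)
  fix c assume c: "c < m" "c \<noteq> x"
  show "beats s (W # D @ B) x c"
  proof (cases "c = y")
    case True
    then show ?thesis using beats B_tie unfolding beats_def by simp
  next
    case False
    have "s m \<le> s 2" using scoring_vector_mono[OF sv, of 2 m] xy by simp
    moreover have "points s W c \<le> s 1" using points_le_first[OF sv W c(1)] .
    ultimately have "total_score s (W # D @ B) c < total_score s (W # D @ B) x"
      using D B_margin c False top by fastforce
    then show ?thesis unfolding beats_def by simp
  qed
qed

definition separating_votes ::
    "nat \<Rightarrow> (nat \<Rightarrow> int) \<Rightarrow> nat list \<Rightarrow> nat list \<Rightarrow> nat \<Rightarrow> nat \<Rightarrow> nat list list \<Rightarrow> bool" where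
  "separating_votes m s VM U a b D \<longleftrightarrow>
     (\<forall>V\<in>set D. linord m V) \<and> beats s (VM # D) a b \<and> beats s (U # D) b a \<and>
     (\<forall>c<m. c \<noteq> a \<longrightarrow> c \<noteq> b \<longrightarrow>
        s m - s 1 \<le> total_score s D a - total_score s D c \<and>
        s m - s 1 \<le> total_score s D b - total_score s D c)"

text \<open>Ties between a and b go to the smaller index, so only one of VM and U needs help: D hands
  b that vote's margin of a over b, and the strict gain of b from VM to U decides the other contest.\<close>

lemma beats_both_of_swapped_margin:
  assumes sv: "scoring_vector m s" and U: "linord m U" and "a < m" "a \<noteq> b"
    and "points s VM a = s 1" and "points s VM b < points s U b"
    and "total_score s D b - total_score s D a =
           (if a < b then points s VM a - points s VM b else points s U a - points s U b)"
  shows "beats s (VM # D) a b \<and> beats s (U # D) b a"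
  using assms points_le_first[OF sv U \<open>a < m\<close>] unfolding beats_def
  by (cases "a < b") auto

lemma linord_exists_best_among:
  assumes sv: "scoring_vector m s" and V: "linord m V" and "c < m" "Q c"
  shows "\<exists>c0<m. Q c0 \<and> (\<forall>x<m. Q x \<longrightarrow> points s V x \<le> points s V c0)"
proof -
  define c0 where "c0 = hd (filter Q V)"
  have "c \<in> set V" using linord_mem_iff[OF V] assms(3) by simp
  then have "c0 < m" "Q c0"
    using hd_filter_mem[of c V Q] assms(4) linord_mem_iff[OF V] unfolding c0_def by auto
  moreover have "points s V x \<le> points s V c0" if "x < m" "Q x" for x
    using points_antimono[OF sv V that(1)] pos_hd_filter_le[of x V Q] linord_mem_iff[OF V] that
    unfolding c0_def by auto
  ultimately show ?thesis by blast
qed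

lemma separating_votes_single:
  assumes sv: "scoring_vector m s" and VM: "linord m VM" and U: "linord m U"
    and ab: "a < m" "b < m" "a \<noteq> b"
    and pa: "points s VM a = s 1" and pb: "points s VM b < points s U b"
  shows "\<exists>D. length D = 1 \<and> separating_votes m s VM U a b D"
proof -
  define V where "V = (if a < b then VM else U)"
  have V: "linord m V" using VM U by (simp add: V_def)
  define D where "D = [map (transpose a b) V]"
  have ts: "total_score s D x = points s V (transpose a b x)" for x
    by (simp add: D_def)
  have "separating_votes m s VM U a b D"
    unfolding separating_votes_def
  proof (intro conjI)
    show "\<forall>W\<in>set D. linord m W"
      using linord_map_transpose[OF V ab(1,2)] by (simp add: D_def)
    show "beats s (VM # D) a b" "beats s (U # D) b a"
      using beats_both_of_swapped_margin[OF sv U ab(1,3) pa pb] by (simp_all add: ts V_def)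
    show "\<forall>c<m. c \<noteq> a \<longrightarrow> c \<noteq> b \<longrightarrow>
        s m - s 1 \<le> total_score s D a - total_score s D c \<and>
        s m - s 1 \<le> total_score s D b - total_score s D c"
      using points_spread[OF sv V] ab by (simp add: ts)
  qed
  then show ?thesis by (intro exI[of _ D]) (simp add: D_def)
qed

definition cycle_pair :: "nat \<Rightarrow> nat \<Rightarrow> nat \<Rightarrow> nat list \<Rightarrow> nat list list" where
  "cycle_pair a b c V =
     [map (transpose a b) (map (transpose b c) V), map (transpose b c) (map (transpose a b) V)]"

lemma linord_cycle_pair:
  "linord m V \<Longrightarrow> a < m \<Longrightarrow> b < m \<Longrightarrow> c < m \<Longrightarrow> W \<in> set (cycle_pair a b c V) \<Longrightarrow> linord m W"
  using linord_map_transpose by (auto simp: cycle_pair_def simp del: map_map)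

lemma total_score_cycle_pair:
  assumes "a \<noteq> b" "b \<noteq> c" "a \<noteq> c"
  shows "total_score s (cycle_pair a b c V) a = points s V c + points s V b"
    and "total_score s (cycle_pair a b c V) b = points s V a + points s V c"
    and "total_score s (cycle_pair a b c V) c = points s V b + points s V a"
    and "x \<notin> {a, b, c} \<Longrightarrow> total_score s (cycle_pair a b c V) x = 2 * points s V x"
  using assms by (simp_all add: cycle_pair_def del: map_map)

lemma separating_votes_pair:
  assumes sv: "scoring_vector m s" and VM: "linord m VM" and U: "linord m U"
    and ab: "a < m" "b < m" "a \<noteq> b" and m: "3 \<le> m"
    and pa: "points s VM a = s 1" and pb: "points s VM b < points s U b"
  shows "\<exists>D. length D = 2 \<and> separating_votes m s VM U a b D"
proof -
  define V where "V = (if a < b then VM else U)"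
  have V: "linord m V" using VM U by (simp add: V_def)
  have "\<exists>c<m. c \<noteq> a \<and> c \<noteq> b" using m by presburger
  then obtain c where "c < m" "c \<noteq> a \<and> c \<noteq> b" by blast
  from linord_exists_best_among[where Q = "\<lambda>x. x \<noteq> a \<and> x \<noteq> b", OF sv V this]
  obtain c0 where c0: "c0 < m" "c0 \<noteq> a" "c0 \<noteq> b"
    and c0_best: "\<forall>x<m. x \<noteq> a \<and> x \<noteq> b \<longrightarrow> points s V x \<le> points s V c0"
    by blast
  \<comment> \<open>Taking c0 best among the others keeps every other candidate within one vote's spread
    of a and b.\<close>
  define D where "D = cycle_pair a b c0 V"
  note ts = total_score_cycle_pair[OF ab(3) c0(3)[symmetric] c0(2)[symmetric], where s = s and V = V, folded D_def]
  have "separating_votes m s VM U a b D"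
    unfolding separating_votes_def
  proof (intro conjI)
    show "\<forall>W\<in>set D. linord m W"
      using linord_cycle_pair[OF V ab(1,2) c0(1)] by (simp add: D_def)
    show "beats s (VM # D) a b" "beats s (U # D) b a"
      using beats_both_of_swapped_margin[OF sv U ab(1,3) pa pb] by (simp_all add: ts V_def)
    show "\<forall>x<m. x \<noteq> a \<longrightarrow> x \<noteq> b \<longrightarrow>
        s m - s 1 \<le> total_score s D a - total_score s D x \<and>
        s m - s 1 \<le> total_score s D b - total_score s D x"
    proof (intro allI impI)
      fix x assume x: "x < m" "x \<noteq> a" "x \<noteq> b"
      have "points s V x \<le> points s V c0" using c0_best x by blast
      then show "s m - s 1 \<le> total_score s D a - total_score s D x \<and>
          s m - s 1 \<le> total_score s D b - total_score s D x"
        using x c0 points_spread[OF sv V ab(1) x(1)] points_spread[OF sv V ab(2) x(1)]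
          points_spread[OF sv V c0(1) ab(1)] points_spread[OF sv V c0(1) ab(2)]
        by (cases "x = c0") (simp_all add: ts)
    qed
  qed
  then show ?thesis by (intro exI[of _ D]) (simp add: D_def cycle_pair_def)
qed

lemma separating_votes_Nil:
  assumes sv: "scoring_vector m s" and VM: "linord m VM" and U: "linord m U"
    and ab: "a < m" "b < m" "a \<noteq> b" and m: "m = 2"
    and pa: "points s VM a = s 1" and pb: "points s VM b < points s U b"
  shows "separating_votes m s VM U a b []"
proof -
  have cands: "{..<m} = {a, b}" using m ab by auto
  have "(\<Sum>i<m. s (i + 1)) = s 1 + s 2"
    by (simp add: m numeral_2_eq_2)
  then have sum_ab: "points s W a + points s W b = s 1 + s 2" if "linord m W" for W
    using sum_points_linord[OF that, of s] ab(3) by (simp add: cands)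
  have two_values: "points s W x = s 1 \<or> points s W x = s 2" if "linord m W" "x < m" for W x
    using linord_pos_less[OF that] m by (auto simp: points_def numeral_2_eq_2 less_Suc_eq)
  have "points s U a < points s U b" "points s VM b < points s VM a"
    using two_values[OF U ab(2)] two_values[OF VM ab(2)] sum_ab[OF U] sum_ab[OF VM] pa pb
    by linarith+
  then show ?thesis
    unfolding separating_votes_def beats_def using cands by auto
qed

lemma separating_votes_exist:
  assumes sv: "scoring_vector m s" and n: "6 * (m - 2) \<le> n"
    and VM: "linord m VM" and U: "linord m U" and ab: "a < m" "b < m" "a \<noteq> b"
    and pa: "points s VM a = s 1" and pb: "points s VM b < points s U b"
  obtains D where "separating_votes m s VM U a b D"
    and "length D \<le> 2" "length D \<le> n" "even (n - length D)"
proof -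
  \<comment> \<open>For m = 2 no two votes shift the a-b margin by a single s 1 - s 2; instead VM and U are then
    the two opposite orders and the manipulator alone decides.\<close>
  consider "odd n" | "even n" "m = 2" | "even n" "3 \<le> m"
    using ab by linarith
  then show ?thesis
  proof cases
    case 1
    moreover obtain D where "length D = 1" "separating_votes m s VM U a b D"
      using separating_votes_single[OF sv VM U ab pa pb] by blast
    ultimately show ?thesis
      using that odd_pos[of n] by simp
  next
    case 2
    then show ?thesis
      using that separating_votes_Nil[OF sv VM U ab _ pa pb] by simp
  next
    case 3
    then show ?thesis
      using that separating_votes_pair[OF sv VM U ab _ pa pb] n by fastforce
  qed
qed

lemma winners_separating_profile:
  assumes sv: "scoring_vector m s" and VM: "linord m VM" and U: "linord m U"
    and ab: "a < m" "b < m" "a \<noteq> b" and D: "separating_votes m s VM U a b D"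
    and R: "linord m (a # b # R)" and N: "2 * length R \<le> N"
    and top: "s m < points s VM a" "s m < points s U b"
  shows "winner m s (VM # D @ pair_block a b R N) = a \<and> winner m s (U # D @ pair_block a b R N) = b"
proof -
  have "distinct R" "length R + 2 = m"
    using R linord_length[OF R] by (simp_all add: linord_def)
  define B where "B = pair_block a b R N"
  have tie: "total_score s B a = total_score s B b"
    using total_score_pair_block_top[OF ab(3)] by (simp add: B_def)
  have margin: "total_score s B c + 2 * (s 1 + s 2 - 2 * s m) \<le> total_score s B a"
    if "c < m" "c \<noteq> a" "c \<noteq> b" for c
  proof -
    have "c \<in> set R" using linord_mem_iff[OF R, of c] that by simp
    then show ?thesis
      using total_score_pair_block_margin[OF sv \<open>distinct R\<close> \<open>length R + 2 = m\<close> N _ that(2,3) ab(3)]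
      by (simp add: B_def)
  qed
  have "winner m s (VM # D @ B) = a"
    using winner_by_margin[OF sv VM ab] D top(1) tie margin
    by (auto simp: separating_votes_def)
  moreover have "winner m s (U # D @ B) = b"
    using winner_by_margin[OF sv U ab(2,1) ab(3)[symmetric]] D top(2) tie margin
    by (auto simp: separating_votes_def)
  ultimately show ?thesis by (simp add: B_def)
qed

lemma separating_profile_exists:
  assumes sv: "scoring_vector m s" and n: "6 * (m - 2) \<le> n"
    and VM: "linord m VM" and U: "linord m U"
    and b: "b < m" and pb: "points s VM b < points s U b"
  shows "\<exists>P\<in>profiles m n. winner m s (VM # P) = hd VM \<and> winner m s (U # P) = b"
proof -
  define a where "a = hd VM"
  have a: "a < m" "pos VM a = 0" using linord_hd[OF VM] b by (auto simp: a_def)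
  then have pa: "points s VM a = s 1" by (simp add: points_def)
  have ab: "a \<noteq> b" using pa pb points_le_first[OF sv U b] by auto
  have top: "s m < points s VM a" "s m < points s U b"
    using points_ge_last[OF sv VM b] pb points_le_first[OF sv U b] pa by auto
  obtain D where D: "separating_votes m s VM U a b D"
    and len_D: "length D \<le> 2" "length D \<le> n" "even (n - length D)"
    using separating_votes_exist[OF sv n VM U a(1) b ab pa pb] by blast
  define R where "R = filter (\<lambda>x. x \<noteq> a \<and> x \<noteq> b) [0..<m]"
  have R: "linord m (a # b # R)"
    using a(1) b ab by (auto simp: R_def linord_def)
  define N where "N = (n - length D) div 2"
  have "length R + 2 = m" using linord_length[OF R] by simp
  then have "2 * (3 * length R - 1) \<le> n - length D"
    using n len_D(1,2) by arith
  then have "3 * length R - 1 \<le> N"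
    by (simp add: N_def less_eq_div_iff_mult_less_eq mult.commute)
  moreover have "2 * length R \<le> 3 * length R - 1 \<or> length R = 0" by arith
  ultimately have N: "2 * length R \<le> N" "length D + 2 * N = n"
    using len_D(2,3) by (auto simp: N_def)
  have "D @ pair_block a b R N \<in> profiles m n"
    using D N(2) linord_pair_block[OF R]
    by (auto simp: profiles_def separating_votes_def length_pair_block)
  then show ?thesis
    using winners_separating_profile[OF sv VM U a(1) b ab D R N(1) top] by (auto simp: a_def)
qed

theorem theorem3:
  fixes m n :: nat and s :: "nat \<Rightarrow> int"
  assumes "n \<ge> 6 * (m - 2)"
    and "scoring_vector m s"
  shows "\<forall>VM U. linord m VM \<longrightarrow> linord m U \<longrightarrow> \<not> dominates m s (profiles m n) VM U VM"
proof (intro allI impI notI)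
  fix VM U
  assume VM: "linord m VM" and U: "linord m U" and dom: "dominates m s (profiles m n) VM U VM"
  obtain P0 where "pos VM (winner m s (U # P0)) < pos VM (winner m s (VM # P0))"
    using dom unfolding dominates_def strictly_above_def by blast
  then have "\<exists>c<m. points s U c \<noteq> points s VM c"
    using winner_Cons_cong by (metis less_irrefl)
  then obtain b where b: "b < m" "points s VM b < points s U b"
    using exists_points_gain[OF U VM] by blast
  obtain P where "P \<in> profiles m n" "winner m s (VM # P) = hd VM" "winner m s (U # P) = b"
    using separating_profile_exists[OF assms(2,1) VM U b] by blast
  with dom have "pos VM b \<le> pos VM (hd VM)"
    unfolding dominates_def weakly_above_def by metis
  then have "points s VM b = s 1"
    using linord_hd[OF VM] b(1) by (simp add: points_def)
  then show False
    using b points_le_first[OF assms(2) U b(1)] by simp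
qed

end
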